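(* Let $n\ge 2$ be an integer and $A\subseteq L_n$. The following are equivalent: (i) $(X_n,\tau(A))$ is Lindelöf; (ii) $(X_n,\tau(A))$ is paracompact; (iii) $(X_n,\tau(A))$ is countably paracompact; (iv) $(X_n,\tau(A))$ is normal; (v) $L_n\setminus A$ does not contain a closed uncountable subset of $(L_n,\tau_E|_{L_n})$.
   Context: For $\overline{x},\overline{a}\in\mathbb R^n$ let $|\overline{x}-\overline{a}|$ be the Euclidean distance and $B(\overline{a},\epsilon)=\{\overline{x}\in\mathbb R^n:|\overline{x}-\overline{a}|<\epsilon\}$. Let $P_n=\{\overline{x}\in\mathbb R^n: x_n>0\}$, $L_n=\{\overline{x}\in\mathbb R^n: x_n=0\}$, $X_n=P_n\cup L_n$, and let $\tau_E$ denote the Euclidean topology on $X_n$. For $\overline{a}\in L_n$ and $\epsilon>0$ put $\overline{a(\epsilon)}=(a_1,\dots,a_{n-1},\epsilon)$ and $\tilde B(\overline{a},\epsilon)=\{\overline{a}\}\cup B(\overline{a(\epsilon)},\epsilon)$. For $A\subseteq L_n$, the topology $\tau(A)$ on $X_n$ is generated by the local bases: at $\overline{a}\in P_n$, the sets $B(\overline{a},\epsilon)$ with $0<\epsilon<a_n$; at $\overline{a}\in A$, the sets $B(\overline{a},\epsilon)\cap X_n$ with $\epsilon>0$; at $\overline{a}\in L_n\setminus A$, the sets $\tilde B(\overline{a},\epsilon)$ with $\epsilon>0$. *)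

theory Defs
  imports "HOL-Analysis.Analysis"
begin

text \<open>Model of R^n (n = CARD('m) + 1 >= 2): pairs (x, t) with x in R^(n-1) and t the last
  coordinate. The product metric on real^'m \<times> real is exactly the Euclidean metric.\<close>

type_synonym 'm pt = "(real^'m) \<times> real"

definition Pn :: "'m::finite pt set" where "Pn = {p. snd p > 0}"
definition Ln :: "'m::finite pt set" where "Ln = {p. snd p = 0}"
definition Xn :: "'m::finite pt set" where "Xn = Pn \<union> Ln"

definition tildeB :: "'m::finite pt \<Rightarrow> real \<Rightarrow> 'm pt set" where
  "tildeB a e = insert a (ball (fst a, e) e)"

definition tauA_open :: "'m::finite pt set \<Rightarrow> 'm pt set \<Rightarrow> bool" where
  "tauA_open A U \<longleftrightarrow> U \<subseteq> Xn \<and>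
     (\<forall>a\<in>U. \<exists>e>0.
        (a \<in> Pn \<longrightarrow> e < snd a \<and> ball a e \<subseteq> U) \<and>
        (a \<in> A \<longrightarrow> ball a e \<inter> Xn \<subseteq> U) \<and>
        (a \<in> Ln - A \<longrightarrow> tildeB a e \<subseteq> U))"

lemma tildeB_mono:
  assumes "0 < e" "e \<le> d"
  shows "tildeB a e \<subseteq> tildeB a d"
proof
  fix p assume p: "p \<in> tildeB a e"
  show "p \<in> tildeB a d"
  proof (cases "p = a")
    case True then show ?thesis by (simp add: tildeB_def)
  next
    case False
    obtain x t where pxt: "p = (x, t)" by fastforce
    have "dist (fst a, e) (x, t) < e" using p False pxt by (simp add: tildeB_def)
    hence "sqrt ((dist (fst a) x)\<^sup>2 + (e - t)\<^sup>2) < sqrt (e\<^sup>2)"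
      using assms by (simp add: dist_Pair_Pair dist_real_def)
    hence h: "(dist (fst a) x)\<^sup>2 + (e - t)\<^sup>2 < e\<^sup>2"
      using real_sqrt_less_iff by blast
    hence t0: "t > 0" using assms
      by (smt (verit, best) zero_le_power2 power2_eq_square mult_mono)
    have "(dist (fst a) x)\<^sup>2 + t\<^sup>2 < 2 * e * t" using h by (simp add: power2_eq_square algebra_simps)
    also have "\<dots> \<le> 2 * d * t" using assms t0 by simp
    finally have "(dist (fst a) x)\<^sup>2 + (d - t)\<^sup>2 < d\<^sup>2" by (simp add: power2_eq_square algebra_simps)
    hence "sqrt ((dist (fst a) x)\<^sup>2 + (d - t)\<^sup>2) < d" using assms
      by (intro real_less_lsqrt) auto
    hence "dist (fst a, d) (x, t) < d"
      by (simp add: dist_Pair_Pair dist_real_def)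
    thus ?thesis using pxt by (simp add: tildeB_def)
  qed
qed

lemma istopology_tauA_open: "istopology (tauA_open A)"
  unfolding istopology_def
proof (intro conjI allI impI)
  fix S T assume S: "tauA_open A S" and T: "tauA_open A T"
  show "tauA_open A (S \<inter> T)"
    unfolding tauA_open_def
  proof (intro conjI ballI)
    show "S \<inter> T \<subseteq> Xn" using S by (auto simp: tauA_open_def)
  next
    fix a assume a: "a \<in> S \<inter> T"
    obtain e1 where e1: "e1 > 0" "(a \<in> Pn \<longrightarrow> e1 < snd a \<and> ball a e1 \<subseteq> S)"
      "(a \<in> A \<longrightarrow> ball a e1 \<inter> Xn \<subseteq> S)" "(a \<in> Ln - A \<longrightarrow> tildeB a e1 \<subseteq> S)"
      using S a unfolding tauA_open_def by blast
    obtain e2 where e2: "e2 > 0" "(a \<in> Pn \<longrightarrow> e2 < snd a \<and> ball a e2 \<subseteq> T)"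
      "(a \<in> A \<longrightarrow> ball a e2 \<inter> Xn \<subseteq> T)" "(a \<in> Ln - A \<longrightarrow> tildeB a e2 \<subseteq> T)"
      using T a unfolding tauA_open_def by blast
    let ?e = "min e1 e2"
    have m1: "tildeB a ?e \<subseteq> tildeB a e1" "tildeB a ?e \<subseteq> tildeB a e2"
      using e1(1) e2(1) tildeB_mono[of ?e e1 a] tildeB_mono[of ?e e2 a] by auto
    show "\<exists>e>0. (a \<in> Pn \<longrightarrow> e < snd a \<and> ball a e \<subseteq> S \<inter> T) \<and>
        (a \<in> A \<longrightarrow> ball a e \<inter> Xn \<subseteq> S \<inter> T) \<and> (a \<in> Ln - A \<longrightarrow> tildeB a e \<subseteq> S \<inter> T)"
      using e1 e2 m1 by (intro exI[of _ ?e]) auto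
  qed
next
  fix K assume K: "\<forall>S\<in>K. tauA_open A S"
  show "tauA_open A (\<Union>K)"
    unfolding tauA_open_def
  proof (intro conjI ballI)
    show "\<Union>K \<subseteq> Xn" using K by (auto simp: tauA_open_def)
  next
    fix a assume "a \<in> \<Union>K"
    then obtain S where S: "S \<in> K" "a \<in> S" by blast
    then obtain e where "e > 0" "(a \<in> Pn \<longrightarrow> e < snd a \<and> ball a e \<subseteq> S)"
      "(a \<in> A \<longrightarrow> ball a e \<inter> Xn \<subseteq> S)" "(a \<in> Ln - A \<longrightarrow> tildeB a e \<subseteq> S)"
      using K unfolding tauA_open_def by blast
    then show "\<exists>e>0. (a \<in> Pn \<longrightarrow> e < snd a \<and> ball a e \<subseteq> \<Union>K) \<and>
        (a \<in> A \<longrightarrow> ball a e \<inter> Xn \<subseteq> \<Union>K) \<and> (a \<in> Ln - A \<longrightarrow> tildeB a e \<subseteq> \<Union>K)"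
      using S by (intro exI[of _ e]) blast
  qed
qed

definition tauA :: "'m::finite pt set \<Rightarrow> 'm pt topology" where
  "tauA A = topology (tauA_open A)"

lemma openin_tauA: "openin (tauA A) U \<longleftrightarrow> tauA_open A U"
  unfolding tauA_def using topology_inverse'[OF istopology_tauA_open[of A]] by simp

text \<open>Refinements and (countable) paracompactness; no separation axiom is built in.\<close>
definition open_refinement :: "'a topology \<Rightarrow> 'a set set \<Rightarrow> 'a set set \<Rightarrow> bool" where
  "open_refinement X \<V> \<U> \<longleftrightarrow>
     (\<forall>V\<in>\<V>. openin X V) \<and> \<Union>\<V> = topspace X \<and> (\<forall>V\<in>\<V>. \<exists>U\<in>\<U>. V \<subseteq> U)"

definition paracompact_space :: "'a topology \<Rightarrow> bool" where
  "paracompact_space X \<longleftrightarrow>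
     (\<forall>\<U>. (\<forall>U\<in>\<U>. openin X U) \<and> \<Union>\<U> = topspace X \<longrightarrow>
        (\<exists>\<V>. open_refinement X \<V> \<U> \<and> locally_finite_in X \<V>))"

definition countably_paracompact_space :: "'a topology \<Rightarrow> bool" where
  "countably_paracompact_space X \<longleftrightarrow>
     (\<forall>\<U>. countable \<U> \<and> (\<forall>U\<in>\<U>. openin X U) \<and> \<Union>\<U> = topspace X \<longrightarrow>
        (\<exists>\<V>. open_refinement X \<V> \<U> \<and> locally_finite_in X \<V>))"

end

theory Submission
  imports Defs
begin

text \<open>The topology tau(A) is regular, and every subset of a Euclidean-closed set
  C \<subseteq> L_n - A is tau(A)-closed, since near L_n - A only tangent discs are used.
  So an uncountable such C is an uncountable closed discrete set and the space is not
  Lindelof. If all such C are countable, a Euclidean Lindelof argument covers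
  everything except a countable closed subset of L_n - A, so the space is Lindelof,
  hence (being regular) paracompact and normal.

  For the converse for normality and countable paracompactness, take a countable dense
  subset D of the perfect kernel of an uncountable C. Tangent discs of radii r and s at
  points of L_n at distance less than 2 sqrt(r s) meet, so Baire's theorem yields a point
  x of C - D every tangent disc of which meets infinitely many of any prescribed discs at
  the points of D. This prevents separating the closed sets D and C - D, and it prevents
  a locally finite refinement of the countable open cover by X_n - D and the sets
  X_n - (C - {d}), d \<in> D.\<close>

subsection \<open>General topology\<close>

lemma ball_Int_ball_nonempty:
  fixes a b :: "'a::real_normed_vector"
  assumes "r > 0" "s > 0" "dist a b < r + s"
  shows "ball a r \<inter> ball b s \<noteq> {}"
proof -
  define q where "q = a + (r / (r + s)) *\<^sub>R (b - a)"
  have "dist a q = r / (r + s) * dist a b"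
    using assms by (simp add: q_def dist_norm norm_minus_commute)
  also have "\<dots> < r"
    using mult_strict_left_mono[OF assms(3) assms(1)] assms by (simp add: field_simps)
  finally have "q \<in> ball a r" by simp
  have "1 - r / (r + s) = s / (r + s)"
    using assms by (simp add: field_simps)
  moreover have "b - q = (1 - r / (r + s)) *\<^sub>R (b - a)"
    by (simp add: q_def scaleR_diff_left algebra_simps)
  ultimately have "b - q = (s / (r + s)) *\<^sub>R (b - a)"
    by simp
  then have "dist b q = s / (r + s) * dist a b"
    using assms by (simp add: dist_norm norm_minus_commute)
  also have "\<dots> < s"
    using mult_strict_left_mono[OF assms(3) assms(2)] assms by (simp add: field_simps)
  finally show ?thesis
    using \<open>q \<in> ball a r\<close> by auto
qed

lemma not_Lindelof_space_if_uncountable_closed_discrete: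
  assumes "\<And>T. T \<subseteq> S \<Longrightarrow> closedin X T" "uncountable S"
  shows "\<not> Lindelof_space X"
proof
  assume "Lindelof_space X"
  define h where "h c = topspace X - (S - {c})" for c
  have "S \<subseteq> topspace X"
    using assms(1) closedin_subset by blast
  moreover have "S \<noteq> {}"
    using assms(2) by auto
  ultimately have "\<Union>(h ` S) = topspace X"
    by (auto simp: h_def)
  moreover have "openin X (h c)" for c
    unfolding h_def using assms(1)[of "S - {c}"] by (simp add: openin_diff)
  ultimately have "\<exists>\<V>. countable \<V> \<and> \<V> \<subseteq> h ` S \<and> \<Union>\<V> = topspace X"
    using Lindelof_spaceD[OF \<open>Lindelof_space X\<close>, of "h ` S"] by auto
  then obtain S' where S': "countable S'" "S' \<subseteq> S" "\<Union>(h ` S') = topspace X"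
    unfolding ex_countable_subset_image by blast
  then obtain c where "c \<in> S - S'"
    using assms(2) countable_subset[of S S'] by blast
  then obtain c' where "c' \<in> S'" "c \<in> h c'"
    using S'(3) \<open>S \<subseteq> topspace X\<close> by blast
  then show False
    using \<open>c \<in> S - S'\<close> by (simp add: h_def)
qed

lemma locally_finite_in_closed_shrinking:
  fixes W C U :: "nat \<Rightarrow> 'a set"
  assumes "\<And>n. openin X (W n)" "\<And>n. closedin X (C n)" "\<And>n. openin X (U n)"
    "\<And>n. W n \<subseteq> C n" "\<And>n. C n \<subseteq> U n" "\<Union>(range W) = topspace X"
  defines "V \<equiv> \<lambda>n. U n - (\<Union>k<n. C k)"
  shows "locally_finite_in X (range V)" "\<Union>(range V) = topspace X"
proof -
  have V_open: "openin X (V n)" for n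
    unfolding V_def using assms(2,3) by (intro openin_diff closedin_Union finite_imageI) auto
  show cover: "\<Union>(range V) = topspace X"
  proof
    show "\<Union>(range V) \<subseteq> topspace X"
      using V_open openin_subset by blast
  next
    show "topspace X \<subseteq> \<Union>(range V)"
    proof
      fix x assume "x \<in> topspace X"
      then have ex: "\<exists>n. x \<in> C n"
        using assms(4,6) by blast
      define n where "n = (LEAST n. x \<in> C n)"
      have "x \<in> C n" "\<And>k. k < n \<Longrightarrow> x \<notin> C k"
        unfolding n_def using LeastI_ex[OF ex] not_less_Least by auto
      then show "x \<in> \<Union>(range V)"
        using assms(5) by (auto simp: V_def)
    qed
  qed
  show "locally_finite_in X (range V)"
    unfolding locally_finite_in_def
  proof (intro conjI ballI)
    fix x assume "x \<in> topspace X"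
    then obtain m where m: "x \<in> W m"
      using assms(6) by auto
    have "V n \<inter> W m = {}" if "m < n" for n
      using that assms(4) by (auto simp: V_def)
    then have "{T \<in> range V. T \<inter> W m \<noteq> {}} \<subseteq> V ` {..m}"
      by (force simp: not_less[symmetric])
    then have "finite {T \<in> range V. T \<inter> W m \<noteq> {}}"
      using finite_subset by blast
    then show "\<exists>T. openin X T \<and> x \<in> T \<and> finite {U \<in> range V. U \<inter> T \<noteq> {}}"
      using m assms(1) by blast
  qed (use cover in simp)
qed

lemma Lindelof_regular_imp_paracompact_space:
  assumes "Lindelof_space X" "regular_space X"
  shows "paracompact_space X"
  unfolding paracompact_space_def
proof (intro allI impI)
  fix \<U> assume \<U>: "(\<forall>U\<in>\<U>. openin X U) \<and> \<Union>\<U> = topspace X"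
  show "\<exists>\<V>. open_refinement X \<V> \<U> \<and> locally_finite_in X \<V>"
  proof (cases "topspace X = {}")
    case True
    then show ?thesis
      by (intro exI[of _ "{}"]) (auto simp: open_refinement_def locally_finite_in_def)
  next
    case False
    define \<W> where "\<W> = {W. openin X W \<and> (\<exists>C U. closedin X C \<and> U \<in> \<U> \<and> W \<subseteq> C \<and> C \<subseteq> U)}"
    have "\<Union>\<W> = topspace X"
    proof
      show "topspace X \<subseteq> \<Union>\<W>"
      proof
        fix x assume "x \<in> topspace X"
        then obtain U where "U \<in> \<U>" "x \<in> U"
          using \<U> by blast
        then obtain W C where "openin X W" "closedin X C" "x \<in> W" "W \<subseteq> C" "C \<subseteq> U"
          using assms(2) \<U> unfolding neighbourhood_base_of_closedin[symmetric] neighbourhood_base_of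
          by meson
        then show "x \<in> \<Union>\<W>"
          unfolding \<W>_def using \<open>U \<in> \<U>\<close> by blast
      qed
    qed (auto simp: \<W>_def dest: openin_subset)
    then obtain \<W>' where \<W>': "countable \<W>'" "\<W>' \<subseteq> \<W>" "\<Union>\<W>' = topspace X"
      using assms(1) Lindelof_spaceD[of X \<W>] by (auto simp: \<W>_def)
    then have "\<W>' \<noteq> {}"
      using False by force
    then obtain W :: "nat \<Rightarrow> 'a set" where W: "range W = \<W>'"
      using range_from_nat_into[OF _ \<W>'(1)] by blast
    then have "\<forall>n. \<exists>C U. closedin X C \<and> U \<in> \<U> \<and> W n \<subseteq> C \<and> C \<subseteq> U"
      using \<W>'(2) unfolding \<W>_def by blast
    then obtain C U where CU: "\<And>n. closedin X (C n)" "\<And>n. U n \<in> \<U>" "\<And>n. W n \<subseteq> C n" "\<And>n. C n \<subseteq> U n"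
      by metis
    define V where "V n = U n - (\<Union>k<n. C k)" for n
    have W_open: "\<And>n. openin X (W n)"
      using W \<W>'(2) by (auto simp: \<W>_def)
    have U_open: "\<And>n. openin X (U n)"
      using CU(2) \<U> by blast
    have "\<Union>(range W) = topspace X"
      using W \<W>'(3) by simp
    then have "locally_finite_in X (range V)" "\<Union>(range V) = topspace X"
      using locally_finite_in_closed_shrinking[OF W_open CU(1) U_open CU(3,4)] by (simp_all add: V_def)
    moreover have "openin X (V n)" for n
      unfolding V_def using CU U_open by (intro openin_diff closedin_Union finite_imageI) auto
    ultimately show ?thesis
      unfolding open_refinement_def using CU by (intro exI[of _ "range V"]) (auto simp: V_def)
  qed
qed

lemma perfect_closed_subset_of_uncountable:
  fixes C :: "'a::{metric_space, second_countable_topology} set"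
  assumes "closed C" "uncountable C"
  obtains K where "K \<subseteq> C" "closed K" "K \<noteq> {}" "\<And>x. x \<in> K \<Longrightarrow> x islimpt K"
proof -
  define \<N> where "\<N> = {T. open T \<and> countable (T \<inter> C)}"
  obtain \<N>' where \<N>': "\<N>' \<subseteq> \<N>" "countable \<N>'" "\<Union>\<N>' = \<Union>\<N>"
    by (rule Lindelof[of \<N>]) (auto simp: \<N>_def)
  have "countable (\<Union>T\<in>\<N>'. T \<inter> C)"
    using \<N>' by (intro countable_UN) (auto simp: \<N>_def)
  moreover have "\<Union>\<N> \<inter> C = (\<Union>T\<in>\<N>'. T \<inter> C)"
    using \<N>'(3) by blast
  ultimately have countable_\<N>: "countable (\<Union>\<N> \<inter> C)"
    by simp
  define K where "K = C - \<Union>\<N>"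
  have "closed K"
    unfolding K_def using assms(1) by (intro closed_Diff open_Union) (auto simp: \<N>_def)
  moreover have "K \<noteq> {}"
  proof
    assume "K = {}"
    then have "C = \<Union>\<N> \<inter> C"
      by (auto simp: K_def)
    then show False
      using countable_\<N> assms(2) by simp
  qed
  moreover have "x islimpt K" if "x \<in> K" for x
    unfolding islimpt_eq_infinite_ball
  proof (intro allI impI notI)
    fix e :: real assume "e > 0" and "finite (K \<inter> ball x e)"
    moreover have "ball x e \<inter> C \<subseteq> (K \<inter> ball x e) \<union> (\<Union>\<N> \<inter> C)"
      by (auto simp: K_def)
    ultimately have "countable (ball x e \<inter> C)"
      using countable_\<N> by (meson countable_Un countable_finite countable_subset)
    then have "ball x e \<in> \<N>"
      by (simp add: \<N>_def)
    then have "x \<in> \<Union>\<N>"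
      using \<open>e > 0\<close> by (meson UnionI centre_in_ball)
    then show False
      using \<open>x \<in> K\<close> by (simp add: K_def)
  qed
  ultimately show thesis
    using that[of K] by (auto simp: K_def)
qed

lemma perfect_subset_closure_Diff_finite:
  fixes K D :: "'a::metric_space set"
  assumes "\<And>x. x \<in> K \<Longrightarrow> x islimpt K" "K \<subseteq> closure D" "finite F"
  shows "K \<subseteq> closure (D - F)"
proof
  fix x assume "x \<in> K"
  then have "x islimpt D"
    using assms(1,2) islimpt_subset limpt_of_closure by blast
  then have "x islimpt (F \<union> (D - F))"
    by (rule islimpt_subset) blast
  then have "x islimpt (D - F)"
    using islimpt_Un_finite[OF assms(3)] by blast
  then show "x \<in> closure (D - F)"
    by (simp add: closure_def)
qed

subsection \<open>The half-space and its tangent discs\<close>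

lemma Xn_iff: "p \<in> Xn \<longleftrightarrow> snd p \<ge> 0"
  by (auto simp: Xn_def Pn_def Ln_def)

lemma Pn_Int_Ln: "Pn \<inter> Ln = {}"
  by (auto simp: Pn_def Ln_def)

lemma closed_Ln: "closed (Ln :: 'm::finite pt set)"
  unfolding Ln_def by (intro closed_Collect_eq continuous_intros)

lemma closed_Xn: "closed (Xn :: 'm::finite pt set)"
proof -
  have "Xn = {p :: 'm pt. 0 \<le> snd p}" using Xn_iff by blast
  moreover have "closed {p :: 'm pt. 0 \<le> snd p}"
    by (intro closed_Collect_le continuous_intros)
  ultimately show ?thesis by simp
qed

lemma dist_Pair_sq:
  "(dist (x, s) (y, t))\<^sup>2 = (dist x y)\<^sup>2 + (s - t)\<^sup>2"
  by (simp add: dist_Pair_Pair dist_real_def)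

lemma dist_Ln: "a \<in> Ln \<Longrightarrow> b \<in> Ln \<Longrightarrow> dist a b = dist (fst a) (fst b)"
  by (simp add: dist_prod_def Ln_def)

lemma dist_tangent_centre_sq:
  "(dist (x, e) p)\<^sup>2 - e\<^sup>2 = (dist x (fst p))\<^sup>2 + (snd p)\<^sup>2 - 2 * e * snd p"
  using dist_Pair_sq[of x e "fst p" "snd p"] by (simp add: power2_eq_square algebra_simps)

lemma mem_tildeB:
  assumes "e > 0"
  shows "p \<in> tildeB a e \<longleftrightarrow> p = a \<or> (dist (fst a) (fst p))\<^sup>2 + (snd p)\<^sup>2 < 2 * e * snd p"
proof -
  have "dist (fst a, e) p < e \<longleftrightarrow> (dist (fst a, e) p)\<^sup>2 < e\<^sup>2"
    using assms power_mono_iff[of e "dist (fst a, e) p" 2] by (simp add: not_le[symmetric])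
  then show ?thesis
    using dist_tangent_centre_sq[of "fst a" e p] by (auto simp: tildeB_def)
qed

lemma mem_cball_tangent:
  assumes "e > 0"
  shows "p \<in> cball (x, e) e \<longleftrightarrow> (dist x (fst p))\<^sup>2 + (snd p)\<^sup>2 \<le> 2 * e * snd p"
proof -
  have "dist (x, e) p \<le> e \<longleftrightarrow> (dist (x, e) p)\<^sup>2 \<le> e\<^sup>2"
    using assms by simp
  then show ?thesis
    using dist_tangent_centre_sq[of x e p] by auto
qed

lemma tildeB_minus_subset_Pn: "e > 0 \<Longrightarrow> tildeB a e - {a} \<subseteq> Pn"
proof
  fix p assume "e > 0" and p: "p \<in> tildeB a e - {a}"
  then have "(dist (fst a) (fst p))\<^sup>2 + (snd p)\<^sup>2 < 2 * e * snd p"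
    using mem_tildeB[of e p a] by blast
  then have "0 < 2 * e * snd p"
    by (meson add_nonneg_nonneg le_less_trans zero_le_power2)
  then show "p \<in> Pn"
    using \<open>e > 0\<close> by (simp add: Pn_def zero_less_mult_iff)
qed

lemma tildeB_subset_Xn: "e > 0 \<Longrightarrow> a \<in> Ln \<Longrightarrow> tildeB a e \<subseteq> Xn"
  using tildeB_minus_subset_Pn[of e a] by (auto simp: Xn_def)

lemma tildeB_subset_ball:
  assumes "e > 0" "a \<in> Ln"
  shows "tildeB a e \<subseteq> ball a (2 * e)"
proof
  fix p assume "p \<in> tildeB a e"
  moreover have "dist a (fst a, e) = e"
    using assms by (simp add: dist_prod_def Ln_def)
  ultimately show "p \<in> ball a (2 * e)"
    using assms(1) dist_triangle[of a p "(fst a, e)"] by (auto simp: tildeB_def)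
qed

lemma ball_subset_Pn: "e \<le> snd a \<Longrightarrow> ball a e \<subseteq> Pn"
proof
  fix p assume "e \<le> snd a" "p \<in> ball a e"
  moreover have "dist (snd a) (snd p) \<le> dist a p"
    by (simp add: dist_snd_le)
  ultimately show "p \<in> Pn"
    by (simp add: Pn_def dist_real_def)
qed

lemma tildeB_Int_tildeB_nonempty:
  assumes "a \<in> Ln" "b \<in> Ln" "r > 0" "s > 0" "dist a b < 2 * sqrt (r * s)"
  shows "tildeB a s \<inter> tildeB b r \<noteq> {}"
proof -
  have "(dist a b)\<^sup>2 < (2 * sqrt (r * s))\<^sup>2"
    using assms(5) by (intro power_strict_mono) auto
  then have "(dist (fst a) (fst b))\<^sup>2 < 4 * r * s"
    using assms by (simp add: dist_Ln power_mult_distrib)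
  then have "(dist (fst a, s) (fst b, r))\<^sup>2 < (s + r)\<^sup>2"
    using dist_Pair_sq[of "fst a" s "fst b" r] by (simp add: power2_eq_square algebra_simps)
  then have "dist (fst a, s) (fst b, r) < s + r"
    using assms(3,4) power_mono_iff[of "s + r" "dist (fst a, s) (fst b, r)" 2]
    by (simp add: not_le[symmetric])
  then have "ball (fst a, s) s \<inter> ball (fst b, r) r \<noteq> {}"
    using ball_Int_ball_nonempty[of s r "(fst a, s)" "(fst b, r)"] assms(3,4) by simp
  then show ?thesis
    by (auto simp: tildeB_def)
qed

lemma cball_tangent_subset_tildeB:
  assumes "e > 0" "a \<in> Ln"
  shows "cball (fst a, e / 2) (e / 2) \<subseteq> tildeB a e"
proof
  fix p assume p: "p \<in> cball (fst a, e / 2) (e / 2)"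
  then have ineq: "(dist (fst a) (fst p))\<^sup>2 + (snd p)\<^sup>2 \<le> e * snd p"
    using mem_cball_tangent[of "e / 2" p "fst a"] assms(1) by simp
  show "p \<in> tildeB a e"
  proof (cases "snd p = 0")
    case True
    then have "fst p = fst a" using ineq by simp
    then have "p = a" using True assms(2) by (simp add: Ln_def prod_eq_iff)
    then show ?thesis by (simp add: tildeB_def)
  next
    case False
    have "0 \<le> e * snd p"
      using ineq by (meson add_nonneg_nonneg order_trans zero_le_power2)
    then have "snd p > 0"
      using False assms(1) by (simp add: zero_le_mult_iff)
    then have "e * snd p < 2 * e * snd p"
      using assms(1) by simp
    then show ?thesis
      using ineq by (simp add: mem_tildeB[OF assms(1)])
  qed
qed

subsection \<open>The topology tau(A)\<close>

text \<open>The first two clauses of tauA_open merge: every point off L_n - A has the relative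
  Euclidean balls as a neighbourhood base.\<close>

lemma openin_tauA_I:
  assumes "U \<subseteq> Xn"
    and ball: "\<And>a. a \<in> U - (Ln - A) \<Longrightarrow> \<exists>e>0. ball a e \<inter> Xn \<subseteq> U"
    and tildeB: "\<And>a. a \<in> U \<inter> (Ln - A) \<Longrightarrow> \<exists>e>0. tildeB a e \<subseteq> U"
  shows "openin (tauA A) U"
  unfolding openin_tauA tauA_open_def
proof (intro conjI ballI assms(1))
  fix a assume a: "a \<in> U"
  show "\<exists>e>0. (a \<in> Pn \<longrightarrow> e < snd a \<and> ball a e \<subseteq> U) \<and> (a \<in> A \<longrightarrow> ball a e \<inter> Xn \<subseteq> U) \<and>
      (a \<in> Ln - A \<longrightarrow> tildeB a e \<subseteq> U)"
  proof (cases "a \<in> Ln - A")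
    case True
    then show ?thesis
      using tildeB[of a] a Pn_Int_Ln by blast
  next
    case False
    then obtain e where e: "e > 0" "ball a e \<inter> Xn \<subseteq> U"
      using ball a by blast
    show ?thesis
    proof (cases "a \<in> Pn")
      case True
      define d where "d = min e (snd a / 2)"
      have "snd a > 0" using True by (simp add: Pn_def)
      then have "d > 0" "d < snd a" using e(1) by (auto simp: d_def)
      moreover have "ball a d \<subseteq> ball a e \<inter> Xn"
        using ball_subset_Pn[of d a] \<open>d < snd a\<close> by (auto simp: d_def Xn_def)
      ultimately show ?thesis
        using e False by (intro exI[of _ d]) auto
    next
      case False
      then show ?thesis
        using e \<open>a \<notin> Ln - A\<close> by (intro exI[of _ e]) auto
    qed
  qed
qed

lemma openin_tauA_E:
  assumes "openin (tauA A) U" "a \<in> U"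
  obtains e where "e > 0" "a \<notin> Ln - A \<Longrightarrow> ball a e \<inter> Xn \<subseteq> U" "a \<in> Ln - A \<Longrightarrow> tildeB a e \<subseteq> U"
proof -
  obtain e where e: "e > 0" "a \<in> Pn \<longrightarrow> e < snd a \<and> ball a e \<subseteq> U"
    "a \<in> A \<longrightarrow> ball a e \<inter> Xn \<subseteq> U" "a \<in> Ln - A \<longrightarrow> tildeB a e \<subseteq> U"
    using assms unfolding openin_tauA tauA_open_def by blast
  moreover have "a \<in> Pn \<or> a \<in> A \<or> a \<in> Ln - A"
    using assms unfolding openin_tauA tauA_open_def Xn_def by blast
  ultimately show ?thesis
    using that by blast
qed

lemma openin_tauA_Int_Xn:
  assumes "open S"
  shows "openin (tauA A) (S \<inter> Xn)"
proof (rule openin_tauA_I)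
  fix a assume "a \<in> S \<inter> Xn - (Ln - A)"
  then obtain e where "e > 0" "ball a e \<subseteq> S"
    using assms open_contains_ball by blast
  then show "\<exists>e>0. ball a e \<inter> Xn \<subseteq> S \<inter> Xn" by blast
next
  fix a assume a: "a \<in> S \<inter> Xn \<inter> (Ln - A)"
  then obtain e where "e > 0" "ball a e \<subseteq> S"
    using assms open_contains_ball by blast
  then have "tildeB a (e / 2) \<subseteq> S \<inter> Xn"
    using a tildeB_subset_ball[of "e / 2" a] tildeB_subset_Xn[of "e / 2" a] by auto
  then show "\<exists>e>0. tildeB a e \<subseteq> S \<inter> Xn"
    using \<open>e > 0\<close> by (intro exI[of _ "e / 2"]) auto
qed auto

lemma topspace_tauA: "topspace (tauA A) = Xn"
proof -
  have "openin (tauA A) Xn"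
    using openin_tauA_Int_Xn[of UNIV A] by simp
  then show ?thesis
    by (metis openin_subset openin_tauA tauA_open_def subset_antisym openin_topspace)
qed

lemma closedin_tauA_Int_Xn:
  assumes "closed S"
  shows "closedin (tauA A) (S \<inter> Xn)"
proof -
  have "openin (tauA A) (- S \<inter> Xn)"
    using assms by (intro openin_tauA_Int_Xn) auto
  moreover have "- S \<inter> Xn = topspace (tauA A) - S \<inter> Xn"
    by (auto simp: topspace_tauA)
  ultimately show ?thesis
    by (simp add: closedin_def topspace_tauA)
qed

lemma openin_tauA_tildeB:
  assumes "e > 0" "a \<in> Ln - A"
  shows "openin (tauA A) (tildeB a e)"
proof (rule openin_tauA_I)
  show "tildeB a e \<subseteq> Xn"
    using assms tildeB_subset_Xn by blast
next
  fix p assume "p \<in> tildeB a e - (Ln - A)"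
  then have "p \<in> ball (fst a, e) e"
    using assms(2) by (auto simp: tildeB_def)
  then obtain d where "d > 0" "ball p d \<subseteq> ball (fst a, e) e"
    using open_contains_ball_eq[of "ball (fst a, e) e"] by blast
  then show "\<exists>d>0. ball p d \<inter> Xn \<subseteq> tildeB a e"
    by (auto simp: tildeB_def)
next
  fix p assume "p \<in> tildeB a e \<inter> (Ln - A)"
  then have "p = a"
    using tildeB_minus_subset_Pn[OF assms(1)] Pn_Int_Ln by blast
  then show "\<exists>d>0. tildeB p d \<subseteq> tildeB a e"
    using assms(1) by blast
qed

lemma regular_space_tauA: "regular_space (tauA A)"
  unfolding neighbourhood_base_of_closedin[symmetric] neighbourhood_base_of
proof (intro allI impI)
  fix W x assume Wx: "openin (tauA A) W \<and> x \<in> W"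
  then obtain e where e: "e > 0" "x \<notin> Ln - A \<Longrightarrow> ball x e \<inter> Xn \<subseteq> W"
    "x \<in> Ln - A \<Longrightarrow> tildeB x e \<subseteq> W"
    using openin_tauA_E by metis
  show "\<exists>U V. openin (tauA A) U \<and> closedin (tauA A) V \<and> x \<in> U \<and> U \<subseteq> V \<and> V \<subseteq> W"
  proof (cases "x \<in> Ln - A")
    case True
    let ?c = "(fst x, e / 2)"
    have "x \<in> cball ?c (e / 2)"
      using True e(1) by (simp add: dist_prod_def Ln_def)
    then have "tildeB x (e / 2) \<subseteq> cball ?c (e / 2)"
      by (auto simp: tildeB_def)
    moreover have "cball ?c (e / 2) \<subseteq> W"
      using cball_tangent_subset_tildeB[OF e(1), of x] e(3) True by blast
    moreover have "cball ?c (e / 2) \<inter> Xn = cball ?c (e / 2)"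
      using cball_tangent_subset_tildeB[OF e(1), of x] tildeB_subset_Xn[OF e(1), of x] True
      by blast
    ultimately show ?thesis
      using openin_tauA_tildeB[of "e / 2" x A] closedin_tauA_Int_Xn[of "cball ?c (e / 2)" A] e(1) True
      by (metis closed_cball half_gt_zero tildeB_def insertI1)
  next
    case False
    have "x \<in> Xn"
      using Wx openin_subset topspace_tauA by blast
    then have "x \<in> ball x (e / 2) \<inter> Xn" "cball x (e / 2) \<inter> Xn \<subseteq> W"
      using e(1) e(2)[OF False] by auto
    then show ?thesis
      using openin_tauA_Int_Xn[of "ball x (e / 2)" A] closedin_tauA_Int_Xn[of "cball x (e / 2)" A]
      by (metis Int_mono ball_subset_cball closed_cball open_ball order_refl)
  qed
qed

lemma closedin_tauA_subset:
  assumes "closed C" "C \<subseteq> Ln - A" "S \<subseteq> C"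
  shows "closedin (tauA A) S"
proof -
  have "openin (tauA A) (Xn - S)"
  proof (rule openin_tauA_I)
    fix a assume a: "a \<in> Xn - S - (Ln - A)"
    then obtain e where "e > 0" "ball a e \<subseteq> - C"
      using assms(1,2) open_contains_ball[of "- C"] by blast
    then show "\<exists>e>0. ball a e \<inter> Xn \<subseteq> Xn - S"
      using assms(3) by blast
  next
    fix a assume a: "a \<in> (Xn - S) \<inter> (Ln - A)"
    have "tildeB a 1 \<subseteq> Xn - S"
      using a assms(2,3) tildeB_subset_Xn[of 1 a] tildeB_minus_subset_Pn[of 1 a] Pn_Int_Ln by fastforce
    then show "\<exists>e>0. tildeB a e \<subseteq> Xn - S"
      by (intro exI[of _ 1]) auto
  qed auto
  moreover have "S \<subseteq> Xn"
    using assms(2,3) by (auto simp: Xn_def)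
  ultimately show ?thesis
    by (simp add: closedin_def topspace_tauA)
qed

lemma Lindelof_space_tauA:
  assumes "\<And>C. closed C \<Longrightarrow> C \<subseteq> Ln - A \<Longrightarrow> countable C"
  shows "Lindelof_space (tauA A)"
  unfolding Lindelof_space_def topspace_tauA
proof (intro allI impI)
  fix \<U> assume \<U>: "(\<forall>U\<in>\<U>. openin (tauA A) U) \<and> \<Union>\<U> = Xn"
  define N where "N = {p :: 'a pt. snd p < 0}"
  define f where "f U = interior (U \<union> N)" for U
  \<comment> \<open>The Euclidean-open sets f U cover X_n except for a Euclidean-closed subset R of L_n - A.\<close>
  obtain \<F> where "\<F> \<subseteq> f ` \<U>" "countable \<F>" "\<Union>\<F> = \<Union>(f ` \<U>)"
    by (rule Lindelof[of "f ` \<U>"]) (auto simp: f_def)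
  then obtain \<U>\<^sub>0 where \<U>\<^sub>0: "countable \<U>\<^sub>0" "\<U>\<^sub>0 \<subseteq> \<U>" "\<Union>(f ` \<U>\<^sub>0) = \<Union>(f ` \<U>)"
    using countable_subset_image[of \<F> f \<U>, THEN iffD1] by blast
  define R where "R = Xn - \<Union>(f ` \<U>)"
  have "R \<subseteq> Ln - A"
  proof
    fix x assume x: "x \<in> R"
    then obtain U where U: "U \<in> \<U>" "x \<in> U"
      using \<U> by (metis R_def DiffD1 UnionE)
    then obtain e where "e > 0" "x \<notin> Ln - A \<Longrightarrow> ball x e \<inter> Xn \<subseteq> U"
      using \<U> openin_tauA_E by metis
    moreover have "Xn \<union> N = UNIV"
      by (auto simp: N_def Xn_iff)
    ultimately have "x \<notin> Ln - A \<Longrightarrow> x \<in> f U"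
      unfolding f_def by (intro interiorI[of "ball x e"]) auto
    then show "x \<in> Ln - A"
      using x U by (auto simp: R_def)
  qed
  moreover have "closed R"
    unfolding R_def f_def using closed_Xn by blast
  ultimately have "countable R"
    using assms by blast
  have "\<forall>r\<in>R. \<exists>U\<in>\<U>. r \<in> U"
    using \<U> by (auto simp: R_def)
  then obtain g where g: "\<And>r. r \<in> R \<Longrightarrow> g r \<in> \<U> \<and> r \<in> g r"
    by metis
  have "Xn \<subseteq> \<Union>(\<U>\<^sub>0 \<union> g ` R)"
  proof
    fix x :: "'a pt" assume x: "x \<in> Xn"
    show "x \<in> \<Union>(\<U>\<^sub>0 \<union> g ` R)"
    proof (cases "x \<in> R")
      case False
      then obtain U where "U \<in> \<U>\<^sub>0" "x \<in> interior (U \<union> N)"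
        using x \<U>\<^sub>0(3) by (auto simp: R_def f_def)
      then show ?thesis
        using x interior_subset by (fastforce simp: N_def Xn_iff)
    qed (use g in blast)
  qed
  moreover have sub: "\<U>\<^sub>0 \<union> g ` R \<subseteq> \<U>"
    using \<U>\<^sub>0(2) g by blast
  moreover have "\<Union>(\<U>\<^sub>0 \<union> g ` R) \<subseteq> Xn"
    using Union_mono[OF sub] \<U> by simp
  ultimately show "\<exists>\<V>. countable \<V> \<and> \<V> \<subseteq> \<U> \<and> \<Union>\<V> = Xn"
    using \<U>\<^sub>0(1) \<open>countable R\<close> by (intro exI[of _ "\<U>\<^sub>0 \<union> g ` R"]) auto
qed

subsection \<open>Uncountable closed subsets of L_n - A\<close>

lemma infinite_tildeB_meeting:
  assumes "x \<in> Ln" "D \<subseteq> Ln" "\<And>d. d \<in> D \<Longrightarrow> r d > 0" "s > 0"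
    and close: "\<And>m F. finite F \<Longrightarrow> F \<subseteq> D \<Longrightarrow>
      \<exists>d\<in>D - F. dist d x < 2 * sqrt (r d * inverse (Suc m))"
  shows "infinite {d\<in>D. tildeB x s \<inter> tildeB d (r d) \<noteq> {}}" (is "infinite ?S")
proof
  assume "finite ?S"
  obtain m where m: "inverse (real (Suc m)) < s"
    using reals_Archimedean[OF \<open>s > 0\<close>] by blast
  let ?\<rho> = "inverse (real (Suc m))"
  obtain d where d: "d \<in> D - ?S" "dist d x < 2 * sqrt (r d * ?\<rho>)"
    using close[OF \<open>finite ?S\<close>, of m] by auto
  then have "tildeB x ?\<rho> \<inter> tildeB d (r d) \<noteq> {}"
    using tildeB_Int_tildeB_nonempty[of x d "r d" ?\<rho>] assms(1-3) by (simp add: dist_commute subsetD)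
  moreover have "tildeB x ?\<rho> \<subseteq> tildeB x s"
    using m by (intro tildeB_mono) auto
  ultimately show False
    using d(1) by blast
qed

lemma tildeB_accumulation_point:
  fixes C :: "'a::finite pt set"
  assumes "closed C" "C \<subseteq> Ln" "uncountable C"
  obtains D where "countable D" "D \<subseteq> C"
    "\<And>r. (\<And>d. d \<in> D \<Longrightarrow> r d > 0) \<Longrightarrow>
       \<exists>x\<in>C - D. \<forall>s>0. infinite {d\<in>D. tildeB x s \<inter> tildeB d (r d) \<noteq> {}}"
proof -
  obtain K where K: "K \<subseteq> C" "closed K" "K \<noteq> {}" "\<And>x. x \<in> K \<Longrightarrow> x islimpt K"
    using perfect_closed_subset_of_uncountable[OF assms(1,3)] by blast
  obtain D where D: "countable D" "D \<subseteq> K" "K \<subseteq> closure D"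
    using separable[of K] by blast
  have "\<exists>x\<in>C - D. \<forall>s>0. infinite {d\<in>D. tildeB x s \<inter> tildeB d (r d) \<noteq> {}}"
    if r: "\<And>d. d \<in> D \<Longrightarrow> r d > 0" for r
  proof -
    \<comment> \<open>x \<in> T m F forces tildeB x (1 / Suc m) to meet tildeB d (r d) for some d \<in> D - F.\<close>
    define T where
      "T m F = K \<inter> ((\<Union>d\<in>D - F. ball d (2 * sqrt (r d * inverse (Suc m)))) - F)" for m :: nat and F
    define \<G> where "\<G> = (\<lambda>(m, F). T m F) ` (UNIV \<times> {F. finite F \<and> F \<subseteq> D})"
    have "countable \<G>"
      unfolding \<G>_def using countable_Collect_finite_subset[OF D(1)] by auto
    moreover have "openin (top_of_set K) G \<and> K \<subseteq> closure G" if "G \<in> \<G>" for G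
    proof -
      obtain m F where G: "G = T m F" "finite F"
        using \<open>G \<in> \<G>\<close> by (auto simp: \<G>_def)
      have "openin (top_of_set K) G"
        unfolding G T_def using G(2) by (intro openin_open_Int open_Diff open_UN finite_imp_closed) auto
      moreover have "D - F \<subseteq> G"
        using D(2) r by (force simp: G T_def)
      then have "K \<subseteq> closure G"
        using perfect_subset_closure_Diff_finite[OF K(4) D(3) G(2)] closure_mono by blast
      ultimately show ?thesis ..
    qed
    ultimately have "K \<subseteq> closure (\<Inter>\<G>)"
      by (rule Baire[OF K(2)])
    then have "\<Inter>\<G> \<noteq> {}"
      using K(3) by auto
    then obtain x where x: "x \<in> \<Inter>\<G>"
      by blast
    have xT: "x \<in> T m F" if "finite F" "F \<subseteq> D" for m F
      using x that by (force simp: \<G>_def)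
    have "x \<in> K" "x \<notin> D"
      using xT[of "{}" 0] xT[of "{x}" 0] by (auto simp: T_def)
    moreover have close: "\<exists>d\<in>D - F. dist d x < 2 * sqrt (r d * inverse (Suc m))"
      if "finite F" "F \<subseteq> D" for m F
      using xT[OF that, of m] by (auto simp: T_def dist_commute)
    moreover have "x \<in> Ln" "D \<subseteq> Ln"
      using \<open>x \<in> K\<close> D(2) K(1) assms(2) by auto
    ultimately show ?thesis
      using infinite_tildeB_meeting[OF \<open>x \<in> Ln\<close> \<open>D \<subseteq> Ln\<close> r _ close] K(1) by blast
  qed
  then show thesis
    using that D K(1) by blast
qed

lemma not_normal_space_tauA:
  assumes "closed C" "C \<subseteq> Ln - A" "uncountable C"
  shows "\<not> normal_space (tauA A)"
proof
  assume "normal_space (tauA A)"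
  obtain D where D: "countable D" "D \<subseteq> C"
    "\<And>r. (\<And>d. d \<in> D \<Longrightarrow> r d > 0) \<Longrightarrow>
       \<exists>x\<in>C - D. \<forall>s>0. infinite {d\<in>D. tildeB x s \<inter> tildeB d (r d) \<noteq> {}}"
    using tildeB_accumulation_point[OF assms(1) _ assms(3)] assms(2) by blast
  have "closedin (tauA A) D" "closedin (tauA A) (C - D)"
    using closedin_tauA_subset[OF assms(1,2)] D(2) by auto
  then obtain U V where UV: "openin (tauA A) U" "openin (tauA A) V" "D \<subseteq> U" "C - D \<subseteq> V" "disjnt U V"
    using \<open>normal_space (tauA A)\<close> unfolding normal_space_def by (meson Diff_disjoint disjnt_def)
  have "\<forall>d\<in>D. \<exists>\<rho>>0. tildeB d \<rho> \<subseteq> U"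
    using openin_tauA_E[OF UV(1)] UV(3) D(2) assms(2) by (metis subsetD)
  then obtain r where r: "\<And>d. d \<in> D \<Longrightarrow> r d > 0 \<and> tildeB d (r d) \<subseteq> U"
    by metis
  then obtain x where x: "x \<in> C - D" "\<And>s. s > 0 \<Longrightarrow> infinite {d\<in>D. tildeB x s \<inter> tildeB d (r d) \<noteq> {}}"
    using D(3)[of r] by blast
  obtain s where "s > 0" "tildeB x s \<subseteq> V"
    using openin_tauA_E[OF UV(2)] x(1) UV(4) assms(2) by (metis DiffD1 subsetD)
  moreover have "{d\<in>D. tildeB x s \<inter> tildeB d (r d) \<noteq> {}} \<noteq> {}"
    using x(2)[OF \<open>s > 0\<close>] by (metis finite.emptyI)
  then obtain d where "d \<in> D" "tildeB x s \<inter> tildeB d (r d) \<noteq> {}"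
    by blast
  ultimately show False
    using r[of d] UV(5) by (auto simp: disjnt_def)
qed

lemma not_countably_paracompact_space_tauA:
  assumes "closed C" "C \<subseteq> Ln - A" "uncountable C"
  shows "\<not> countably_paracompact_space (tauA A)"
proof
  assume "countably_paracompact_space (tauA A)"
  obtain D where D: "countable D" "D \<subseteq> C"
    "\<And>r. (\<And>d. d \<in> D \<Longrightarrow> r d > 0) \<Longrightarrow>
       \<exists>x\<in>C - D. \<forall>s>0. infinite {d\<in>D. tildeB x s \<inter> tildeB d (r d) \<noteq> {}}"
    using tildeB_accumulation_point[OF assms(1) _ assms(3)] assms(2) by blast
  have C_Xn: "C \<subseteq> Xn"
    using assms(2) by (auto simp: Xn_def)
  have open_Xn_Diff: "openin (tauA A) (Xn - S)" if "S \<subseteq> C" for S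
    using closedin_tauA_subset[OF assms(1,2) that] openin_diff[OF openin_topspace]
    by (metis topspace_tauA)
  define h where "h d = Xn - (C - {d})" for d
  define \<U> where "\<U> = insert (Xn - D) (h ` D)"
  have "countable \<U>"
    using D(1) by (simp add: \<U>_def)
  moreover have "\<forall>U\<in>\<U>. openin (tauA A) U"
    using open_Xn_Diff D(2) by (auto simp: \<U>_def h_def)
  moreover have "\<Union>\<U> = topspace (tauA A)"
    by (auto simp: \<U>_def h_def topspace_tauA)
  ultimately obtain \<V> where \<V>: "open_refinement (tauA A) \<V> \<U>" "locally_finite_in (tauA A) \<V>"
    using \<open>countably_paracompact_space (tauA A)\<close> unfolding countably_paracompact_space_def by blast
  have "\<Union>\<V> = Xn"
    using \<V>(1) by (simp add: open_refinement_def topspace_tauA)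
  then have "\<forall>d\<in>D. \<exists>V\<in>\<V>. d \<in> V"
    using D(2) C_Xn by blast
  then obtain Vd where Vd: "\<And>d. d \<in> D \<Longrightarrow> Vd d \<in> \<V> \<and> d \<in> Vd d"
    by metis
  have Vd_C: "Vd d \<inter> C \<subseteq> {d}" if "d \<in> D" for d
  proof -
    have "\<forall>V\<in>\<V>. \<exists>U\<in>\<U>. V \<subseteq> U"
      using \<V>(1) by (simp add: open_refinement_def)
    moreover have "Vd d \<in> \<V>" "d \<in> Vd d"
      using Vd[OF that] by auto
    ultimately obtain U where "U \<in> \<U>" "Vd d \<subseteq> U" "d \<in> U"
      by blast
    then have "U = h d"
      using that D(2) by (auto simp: \<U>_def h_def)
    then show ?thesis
      using \<open>Vd d \<subseteq> U\<close> by (auto simp: h_def)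
  qed
  have "inj_on Vd D"
  proof (rule inj_onI)
    fix d d' assume "d \<in> D" "d' \<in> D" "Vd d = Vd d'"
    then show "d = d'"
      using Vd_C[of d] Vd[of d'] D(2) by blast
  qed
  have "\<forall>d\<in>D. \<exists>\<rho>>0. tildeB d \<rho> \<subseteq> Vd d"
    using openin_tauA_E \<V>(1) Vd D(2) assms(2) unfolding open_refinement_def by (metis subsetD)
  then obtain r where r: "\<And>d. d \<in> D \<Longrightarrow> r d > 0 \<and> tildeB d (r d) \<subseteq> Vd d"
    by metis
  then obtain x where x: "x \<in> C - D" "\<And>s. s > 0 \<Longrightarrow> infinite {d\<in>D. tildeB x s \<inter> tildeB d (r d) \<noteq> {}}"
    using D(3)[of r] by blast
  then obtain W where W: "openin (tauA A) W" "x \<in> W" "finite {V \<in> \<V>. V \<inter> W \<noteq> {}}"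
    using \<V>(2) C_Xn unfolding locally_finite_in_def topspace_tauA by blast
  then obtain s where "s > 0" "tildeB x s \<subseteq> W"
    using openin_tauA_E[OF W(1,2)] x(1) assms(2) by (metis DiffD1 subsetD)
  define S where "S = {d\<in>D. tildeB x s \<inter> tildeB d (r d) \<noteq> {}}"
  have "Vd ` S \<subseteq> {V \<in> \<V>. V \<inter> W \<noteq> {}}"
    using Vd r \<open>tildeB x s \<subseteq> W\<close> by (fastforce simp: S_def)
  then have "finite (Vd ` S)"
    using W(3) finite_subset by blast
  moreover have "inj_on Vd S"
    using \<open>inj_on Vd D\<close> by (rule inj_on_subset) (auto simp: S_def)
  ultimately show False
    using x(2)[OF \<open>s > 0\<close>] finite_imageD by (auto simp: S_def)
qed

theorem mainTheorem6:
  fixes A :: "('m::finite) pt set"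
  assumes "A \<subseteq> Ln"
  shows "(Lindelof_space (tauA A) \<longleftrightarrow> paracompact_space (tauA A)) \<and>
         (paracompact_space (tauA A) \<longleftrightarrow> countably_paracompact_space (tauA A)) \<and>
         (countably_paracompact_space (tauA A) \<longleftrightarrow> normal_space (tauA A)) \<and>
         (normal_space (tauA A) \<longleftrightarrow>
            \<not> (\<exists>C. C \<subseteq> Ln - A \<and> closedin (subtopology euclidean Ln) C \<and> uncountable C))"
proof -
  define P where "P \<longleftrightarrow> (\<forall>C :: 'm pt set. closed C \<longrightarrow> C \<subseteq> Ln - A \<longrightarrow> countable C)"
  have P_iff: "P \<longleftrightarrow> \<not> (\<exists>C. C \<subseteq> Ln - A \<and> closedin (subtopology euclidean Ln) C \<and> uncountable C)"
    unfolding P_def closedin_closed_eq[OF closed_Ln] by auto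
  have not_Lindelof: "\<not> Lindelof_space (tauA A)" if "closed C" "C \<subseteq> Ln - A" "uncountable C" for C
    using closedin_tauA_subset[OF that(1,2)] that(3) by (rule not_Lindelof_space_if_uncountable_closed_discrete)
  have "P \<Longrightarrow> Lindelof_space (tauA A)"
    unfolding P_def by (rule Lindelof_space_tauA) blast
  moreover have "Lindelof_space (tauA A) \<Longrightarrow> P"
    unfolding P_def using not_Lindelof by blast
  moreover have "Lindelof_space (tauA A) \<Longrightarrow> paracompact_space (tauA A)"
    using Lindelof_regular_imp_paracompact_space regular_space_tauA by blast
  moreover have "paracompact_space (tauA A) \<Longrightarrow> countably_paracompact_space (tauA A)"
    unfolding paracompact_space_def countably_paracompact_space_def by blast
  moreover have "countably_paracompact_space (tauA A) \<Longrightarrow> P"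
    unfolding P_def by (meson not_countably_paracompact_space_tauA)
  moreover have "Lindelof_space (tauA A) \<Longrightarrow> normal_space (tauA A)"
    using regular_Lindelof_imp_normal_space regular_space_tauA by blast
  moreover have "normal_space (tauA A) \<Longrightarrow> P"
    unfolding P_def by (meson not_normal_space_tauA)
  ultimately show ?thesis
    unfolding P_iff[symmetric] by blast
qed

end
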